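(* Let $Q$ be a supported quantale with base locale $Q_0$ and support $\varsigma$. The following are equivalent: (1) $\varsigma(xy)\le\varsigma(x)$ for all $x,y\in Q$; (2) $\varsigma(x1_Q)=\varsigma(x)$ for all $x\in Q$; (3) $\varsigma(xy)=\varsigma(x\triangleleft\varsigma(y))$ for all $x,y\in Q$.
   Context: For a locale $A$, an $A$-$A$-bimodule is a sup-lattice $M$ with actions $a\triangleright m$, $m\triangleleft a$ preserving joins in each variable, with $1_A\triangleright m=m$, $(a\wedge b)\triangleright m=a\triangleright(b\triangleright m)$, $m\triangleleft1_A=m$, $m\triangleleft(a\wedge b)=(m\triangleleft a)\triangleleft b$, $(a\triangleright m)\triangleleft b=a\triangleright(m\triangleleft b)$. An $A$-$A$-quantale is such a $Q$ with associative join-preserving multiplication and $(a\triangleright x)y=a\triangleright(xy)$, $(x\triangleleft a)y=x(a\triangleright y)$, $(xy)\triangleleft a=x(y\triangleleft a)$; involutive if there is a join-preserving $x\mapsto x^*$ with $x^{**}=x$, $(xy)^*=y^*x^*$, $(a\triangleright(x\triangleleft b))^*=b\triangleright(x^*\triangleleft a)$. A based quantale is an involutive $Q_0$-$Q_0$-quantale for a locale $Q_0$; $1_Q$ is its top. A supported quantale is a based quantale with a support, i.e. a join-preserving $\varsigma:Q\to Q_0$ with $\varsigma(1_Q)=1_{Q_0}$, $\varsigma(x)\triangleright y\le xx^*y$ and $\varsigma(x)\triangleright x=x$ for all $x,y\in Q$. *)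

theory Defs
  imports Main
begin

definition is_locale :: "'a::complete_lattice itself \<Rightarrow> bool" where
  "is_locale _ \<longleftrightarrow> (\<forall>(a::'a) S. inf a (Sup S) = (SUP s\<in>S. inf a s))"

definition join_pres :: "('a::complete_lattice \<Rightarrow> 'b::complete_lattice) \<Rightarrow> bool" where
  "join_pres f \<longleftrightarrow> (\<forall>S. f (Sup S) = (SUP s\<in>S. f s))"

definition bimodule ::
  "('a::complete_lattice \<Rightarrow> 'm::complete_lattice \<Rightarrow> 'm) \<Rightarrow> ('m \<Rightarrow> 'a \<Rightarrow> 'm) \<Rightarrow> bool" where
  "bimodule l r \<longleftrightarrow>
     (\<forall>a. join_pres (l a)) \<and> (\<forall>m. join_pres (\<lambda>a. l a m)) \<and>
     (\<forall>m. join_pres (r m)) \<and> (\<forall>a. join_pres (\<lambda>m. r m a)) \<and>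
     (\<forall>m. l top m = m) \<and> (\<forall>a b m. l (inf a b) m = l a (l b m)) \<and>
     (\<forall>m. r m top = m) \<and> (\<forall>a b m. r m (inf a b) = r (r m a) b) \<and>
     (\<forall>a b m. r (l a m) b = l a (r m b))"

definition AA_quantale ::
  "('a::complete_lattice \<Rightarrow> 'q::complete_lattice \<Rightarrow> 'q) \<Rightarrow> ('q \<Rightarrow> 'a \<Rightarrow> 'q) \<Rightarrow> ('q \<Rightarrow> 'q \<Rightarrow> 'q) \<Rightarrow> bool" where
  "AA_quantale l r mult \<longleftrightarrow>
     bimodule l r \<and>
     (\<forall>x y z. mult (mult x y) z = mult x (mult y z)) \<and>
     (\<forall>x. join_pres (mult x)) \<and> (\<forall>y. join_pres (\<lambda>x. mult x y)) \<and>
     (\<forall>a x y. mult (l a x) y = l a (mult x y)) \<and>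
     (\<forall>a x y. mult (r x a) y = mult x (l a y)) \<and>
     (\<forall>a x y. r (mult x y) a = mult x (r y a))"

definition involutive_AA_quantale ::
  "('a::complete_lattice \<Rightarrow> 'q::complete_lattice \<Rightarrow> 'q) \<Rightarrow> ('q \<Rightarrow> 'a \<Rightarrow> 'q) \<Rightarrow> ('q \<Rightarrow> 'q \<Rightarrow> 'q)
     \<Rightarrow> ('q \<Rightarrow> 'q) \<Rightarrow> bool" where
  "involutive_AA_quantale l r mult invl \<longleftrightarrow>
     AA_quantale l r mult \<and> join_pres invl \<and>
     (\<forall>x. invl (invl x) = x) \<and>
     (\<forall>x y. invl (mult x y) = mult (invl y) (invl x)) \<and>
     (\<forall>a b x. invl (l a (r x b)) = l b (r (invl x) a))"

definition based_quantale ::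
  "('a::complete_lattice \<Rightarrow> 'q::complete_lattice \<Rightarrow> 'q) \<Rightarrow> ('q \<Rightarrow> 'a \<Rightarrow> 'q) \<Rightarrow> ('q \<Rightarrow> 'q \<Rightarrow> 'q)
     \<Rightarrow> ('q \<Rightarrow> 'q) \<Rightarrow> bool" where
  "based_quantale l r mult invl \<longleftrightarrow> is_locale TYPE('a) \<and> involutive_AA_quantale l r mult invl"

definition is_support ::
  "('a::complete_lattice \<Rightarrow> 'q::complete_lattice \<Rightarrow> 'q) \<Rightarrow> ('q \<Rightarrow> 'q \<Rightarrow> 'q)
     \<Rightarrow> ('q \<Rightarrow> 'q) \<Rightarrow> ('q \<Rightarrow> 'a) \<Rightarrow> bool" where
  "is_support l mult invl supp \<longleftrightarrow>
     join_pres supp \<and> supp top = top \<and>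
     (\<forall>x y. l (supp x) y \<le> mult (mult x (invl x)) y) \<and>
     (\<forall>x. l (supp x) x = x)"

definition supported_quantale ::
  "('a::complete_lattice \<Rightarrow> 'q::complete_lattice \<Rightarrow> 'q) \<Rightarrow> ('q \<Rightarrow> 'a \<Rightarrow> 'q) \<Rightarrow> ('q \<Rightarrow> 'q \<Rightarrow> 'q)
     \<Rightarrow> ('q \<Rightarrow> 'q) \<Rightarrow> ('q \<Rightarrow> 'a) \<Rightarrow> bool" where
  "supported_quantale l r mult invl supp \<longleftrightarrow>
     based_quantale l r mult invl \<and> is_support l mult invl supp"

end

theory Submission
  imports Defs
begin

text \<open>All three conditions say that right multiplication cannot enlarge supports. Since
  \<open>x \<le> x 1\<close> and \<open>x y \<le> x 1\<close>, condition (1) amounts to \<open>\<varsigma>(x 1) = \<varsigma>(x)\<close>. Every product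
  can be rewritten as \<open>x y = (x \<triangleleft> \<varsigma> y) y\<close>, and conversely
  \<open>(x \<triangleleft> \<varsigma> y) 1 = x (\<varsigma> y \<triangleright> 1) \<le> x y y\<^sup>* 1 \<le> (x y) 1\<close>; with (2) both inequalities pass to
  supports and give (3). Setting \<open>y = 1\<close> in (3) gives back (2).\<close>

lemma join_pres_mono:
  assumes "join_pres f"
  shows "mono f"
proof
  fix a b :: 'a
  assume "a \<le> b"
  have "f (Sup {a, b}) = (SUP s\<in>{a, b}. f s)" using assms unfolding join_pres_def by blast
  then have "f b = sup (f a) (f b)" using \<open>a \<le> b\<close> by (simp add: sup_absorb2)
  then show "f a \<le> f b" by (metis sup.cobounded1)
qed

locale supported_AA_quantale =
  fixes l :: "'a::complete_lattice \<Rightarrow> 'q::complete_lattice \<Rightarrow> 'q" (infixr "\<triangleright>" 76)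
    and r :: "'q \<Rightarrow> 'a \<Rightarrow> 'q" (infixl "\<triangleleft>" 75)
    and mult :: "'q \<Rightarrow> 'q \<Rightarrow> 'q" (infixl "\<cdot>" 70)
    and invl :: "'q \<Rightarrow> 'q"
    and supp :: "'q \<Rightarrow> 'a"
  assumes quantale: "AA_quantale l r mult"
    and support: "is_support l mult invl supp"
begin

lemma mult_assoc: "x \<cdot> y \<cdot> z = x \<cdot> (y \<cdot> z)"
  using quantale unfolding AA_quantale_def by blast

lemma right_action_mult: "(x \<triangleleft> a) \<cdot> y = x \<cdot> (a \<triangleright> y)"
  using quantale unfolding AA_quantale_def by blast

lemma right_action_top: "x \<triangleleft> top = x"
  using quantale unfolding AA_quantale_def bimodule_def by simp

lemma mult_mono_right: "a \<le> b \<Longrightarrow> x \<cdot> a \<le> x \<cdot> b"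
  using quantale join_pres_mono unfolding AA_quantale_def mono_def by blast

lemma mult_le_mult_top: "x \<cdot> y \<le> x \<cdot> top"
  by (rule mult_mono_right) simp

lemma supp_mono: "a \<le> b \<Longrightarrow> supp a \<le> supp b"
  using support join_pres_mono unfolding is_support_def mono_def by blast

lemma supp_top: "supp top = top"
  using support unfolding is_support_def by blast

lemma supp_action_le: "supp x \<triangleright> y \<le> x \<cdot> invl x \<cdot> y"
  using support unfolding is_support_def by blast

lemma supp_action_self: "supp x \<triangleright> x = x"
  using support unfolding is_support_def by blast

lemma le_mult_top: "x \<le> x \<cdot> top"
proof -
  have "x = supp x \<triangleright> x" by (simp add: supp_action_self)
  also have "\<dots> \<le> x \<cdot> invl x \<cdot> x" by (rule supp_action_le)
  also have "\<dots> \<le> x \<cdot> top" unfolding mult_assoc by (rule mult_le_mult_top)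
  finally show ?thesis .
qed

lemma mult_eq_right_action_supp_mult: "x \<cdot> y = (x \<triangleleft> supp y) \<cdot> y"
  by (simp add: right_action_mult supp_action_self)

lemma right_action_supp_mult_top_le: "(x \<triangleleft> supp y) \<cdot> top \<le> x \<cdot> y \<cdot> top"
proof -
  have "(x \<triangleleft> supp y) \<cdot> top = x \<cdot> (supp y \<triangleright> top)" by (rule right_action_mult)
  also have "\<dots> \<le> x \<cdot> (y \<cdot> invl y \<cdot> top)" by (intro mult_mono_right supp_action_le)
  also have "\<dots> = x \<cdot> y \<cdot> (invl y \<cdot> top)" by (simp add: mult_assoc)
  also have "\<dots> \<le> x \<cdot> y \<cdot> top" by (rule mult_le_mult_top)
  finally show ?thesis .
qed

lemma supp_mult_le_iff_supp_mult_top: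
  "(\<forall>x y. supp (x \<cdot> y) \<le> supp x) \<longleftrightarrow> (\<forall>x. supp (x \<cdot> top) = supp x)"
  using supp_mono[OF le_mult_top] supp_mono[OF mult_le_mult_top] by (metis order.antisym)

lemma supp_mult_top_iff_supp_mult_right_action:
  "(\<forall>x. supp (x \<cdot> top) = supp x) \<longleftrightarrow> (\<forall>x y. supp (x \<cdot> y) = supp (x \<triangleleft> supp y))"
proof
  assume stable: "\<forall>x. supp (x \<cdot> top) = supp x"
  then have decreasing: "supp (x \<cdot> y) \<le> supp x" for x y
    using supp_mult_le_iff_supp_mult_top by blast
  show "\<forall>x y. supp (x \<cdot> y) = supp (x \<triangleleft> supp y)"
  proof (intro allI order.antisym)
    fix x y
    show "supp (x \<cdot> y) \<le> supp (x \<triangleleft> supp y)"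
      using decreasing by (subst mult_eq_right_action_supp_mult)
    show "supp (x \<triangleleft> supp y) \<le> supp (x \<cdot> y)"
      using supp_mono[OF right_action_supp_mult_top_le] stable by simp
  qed
next
  assume "\<forall>x y. supp (x \<cdot> y) = supp (x \<triangleleft> supp y)"
  then show "\<forall>x. supp (x \<cdot> top) = supp x"
    by (simp add: supp_top right_action_top)
qed

end

theorem lemma3p15:
  fixes l :: "'a::complete_lattice \<Rightarrow> 'q::complete_lattice \<Rightarrow> 'q"
    and r :: "'q \<Rightarrow> 'a \<Rightarrow> 'q"
    and mult :: "'q \<Rightarrow> 'q \<Rightarrow> 'q"
    and invl :: "'q \<Rightarrow> 'q"
    and supp :: "'q \<Rightarrow> 'a"
  assumes "supported_quantale l r mult invl supp"
  shows "((\<forall>x y. supp (mult x y) \<le> supp x) \<longleftrightarrow> (\<forall>x. supp (mult x top) = supp x))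
       \<and> ((\<forall>x. supp (mult x top) = supp x) \<longleftrightarrow> (\<forall>x y. supp (mult x y) = supp (r x (supp y))))"
proof -
  interpret supported_AA_quantale l r mult invl supp
    using assms unfolding supported_quantale_def based_quantale_def involutive_AA_quantale_def
    by unfold_locales blast+
  show ?thesis
    using supp_mult_le_iff_supp_mult_top supp_mult_top_iff_supp_mult_right_action by blast
qed

end
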